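(* Let $e:\mathbb{R}^3\to\mathbb{R}^4$ be the map $e(x_1,x_2,x_3)=(-x_1+x_2+x_3,\ x_1-x_2+x_3,\ x_1+x_2-x_3,\ x_1+x_2+x_3)$, which is an isometric embedding of $(\mathbb{R}^3,\ell_1)$ into $(\mathbb{R}^4,\ell_\infty)$. Let $X\subseteq\mathbb{R}^3$ be $1/8$-dense in $(\mathbb{R}^3,\ell_1)$. Then the open $1$-neighborhood $N_1(e(X))=\{y\in\mathbb{R}^4:\exists x\in X,\ \|y-e(x)\|_\infty<1\}$ of $e(X)$ in $(\mathbb{R}^4,\ell_\infty)$ is contractible.
   Context: $\ell_1$ metric: $\|x-y\|_1=\sum_i|x_i-y_i|$; $\ell_\infty$ metric: $\|x-y\|_\infty=\max_i|x_i-y_i|$. A subset $K$ of a metric space $Y$ is $\epsilon$-dense if for every $y\in Y$ there exists $k\in K$ with $d_Y(y,k)<\epsilon$. *)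

theory Defs
  imports "HOL-Analysis.Analysis"
begin

definition l1_dist :: "real^3 \<Rightarrow> real^3 \<Rightarrow> real" where
  "l1_dist x y = (\<Sum>i\<in>UNIV. \<bar>x$i - y$i\<bar>)"

definition linf_dist :: "real^4 \<Rightarrow> real^4 \<Rightarrow> real" where
  "linf_dist x y = Max (range (\<lambda>i. \<bar>x$i - y$i\<bar>))"

definition emb :: "real^3 \<Rightarrow> real^4" where
  "emb x = vector [- x$1 + x$2 + x$3, x$1 - x$2 + x$3, x$1 + x$2 - x$3, x$1 + x$2 + x$3]"

definition l1_dense :: "real \<Rightarrow> (real^3) set \<Rightarrow> bool" where
  "l1_dense \<epsilon> K \<longleftrightarrow> (\<forall>y. \<exists>k\<in>K. l1_dist y k < \<epsilon>)"

definition linf_nbhd :: "real \<Rightarrow> (real^4) set \<Rightarrow> (real^4) set" where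
  "linf_nbhd r A = {y. \<exists>a\<in>A. linf_dist y a < r}"

end

theory Submission
  imports Defs
begin

text \<open>The image of \<open>emb\<close> is the hyperplane \<open>H\<close> orthogonal to \<open>w = (1,1,1,-1)\<close>.
  Projecting along \<open>w\<close> onto \<open>H\<close> moves a point \<open>z\<close> by \<open>|w \<bullet> z|/4\<close> in every coordinate, and
  \<open>emb\<close> is 1-Lipschitz from \<open>\<ell>\<^sub>1\<close> to \<open>\<ell>\<^sub>\<infinity>\<close>, so the slab \<open>|w \<bullet> z| < 7/2\<close> lies in
  \<open>N\<^sub>1(e(X))\<close>. Outside that slab, sliding a point of \<open>N\<^sub>1(e(X))\<close> towards \<open>H\<close> along \<open>w\<close> keeps it
  in the same unit cube around a point of \<open>e(X)\<close>, since a large \<open>|w \<bullet> z|\<close> forces all four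
  coordinate offsets to the sign that makes the slide shrink them. Hence the straight-line
  homotopy to the projection stays in \<open>N\<^sub>1(e(X))\<close>, and the convex set \<open>H\<close> contracts to a point.\<close>

lemma contractible_by_segments_to_convex_subset:
  fixes S T :: "'a::real_normed_vector set"
  assumes "convex T" "T \<subseteq> S" "continuous_on S r" "r ` S \<subseteq> T"
    and segments: "\<And>y. y \<in> S \<Longrightarrow> closed_segment y (r y) \<subseteq> S"
  shows "contractible S"
proof (cases "S = {}")
  case False
  then obtain a where a: "a \<in> T" using assms(4) by blast
  have "homotopic_with_canon (\<lambda>_. True) S S id r"
    by (rule homotopic_with_linear) (simp_all add: assms(3) continuous_on_id segments)
  moreover have "homotopic_with_canon (\<lambda>_. True) S S r (\<lambda>_. a)"
    by (rule homotopic_with_linear[OF assms(3) continuous_on_const])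
      (use assms a in \<open>meson closed_segment_subset image_subset_iff order_trans\<close>)
  ultimately show ?thesis
    unfolding contractible_def by (meson homotopic_with_trans)
qed simp

lemma linf_dist_less_iff: "linf_dist y a < r \<longleftrightarrow> (\<forall>i. \<bar>y$i - a$i\<bar> < r)"
  unfolding linf_dist_def by (subst Max_less_iff) auto

lemma emb_nth [simp]:
  "emb x $ 1 = - x$1 + x$2 + x$3" "emb x $ 2 = x$1 - x$2 + x$3"
  "emb x $ 3 = x$1 + x$2 - x$3" "emb x $ 4 = x$1 + x$2 + x$3"
  by (simp_all add: emb_def vector_def)

lemma emb_nth_diff_le_l1_dist: "\<bar>emb a $ i - emb b $ i\<bar> \<le> l1_dist a b"
  using exhaust_4[of i] unfolding l1_dist_def sum_3 by (auto simp: abs_le_iff abs_if)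

definition normal_dir :: "real^4" where
  "normal_dir = vector [1, 1, 1, -1]"

definition hyperplane_proj :: "real^4 \<Rightarrow> real^4" where
  "hyperplane_proj y = y - ((normal_dir \<bullet> y) / 4) *\<^sub>R normal_dir"

lemma normal_dir_nth [simp]:
  "normal_dir $ 1 = 1" "normal_dir $ 2 = 1" "normal_dir $ 3 = 1" "normal_dir $ 4 = -1"
  by (simp_all add: normal_dir_def vector_def)

lemma inner_normal_dir: "normal_dir \<bullet> y = y$1 + y$2 + y$3 - y$4"
  by (simp add: inner_vec_def sum_4)

lemma inner_normal_dir_emb [simp]: "normal_dir \<bullet> emb x = 0"
  by (simp add: inner_normal_dir)

lemma inner_normal_dir_hyperplane_proj [simp]: "normal_dir \<bullet> hyperplane_proj y = 0"
  by (simp add: hyperplane_proj_def inner_diff_right inner_normal_dir)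

lemma hyperplane_in_range_emb:
  assumes "normal_dir \<bullet> q = 0"
  shows "q = emb (vector [(q$2 + q$3)/2, (q$1 + q$3)/2, (q$1 + q$2)/2])"
proof -
  have "q$4 = q$1 + q$2 + q$3" using assms by (simp add: inner_normal_dir)
  then show ?thesis
    by (simp add: vec_eq_iff vector_def forall_4 field_simps)
qed

lemma slab_subset_linf_nbhd:
  assumes "l1_dense \<epsilon> X" "\<bar>normal_dir \<bullet> z\<bar> / 4 + \<epsilon> \<le> r"
  shows "z \<in> linf_nbhd r (emb ` X)"
proof -
  obtain x0 where x0: "hyperplane_proj z = emb x0"
    using hyperplane_in_range_emb[OF inner_normal_dir_hyperplane_proj] by blast
  obtain x where x: "x \<in> X" "l1_dist x0 x < \<epsilon>"
    using assms(1) unfolding l1_dense_def by blast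
  have proj_offset: "\<bar>z$i - emb x0 $ i\<bar> = \<bar>normal_dir \<bullet> z\<bar> / 4" for i
    using exhaust_4[of i] unfolding x0[symmetric] by (auto simp: hyperplane_proj_def)
  have "\<bar>z$i - emb x $ i\<bar> < r" for i
    using proj_offset[of i] emb_nth_diff_le_l1_dist[of x0 i x] x(2) assms(2) by linarith
  then show ?thesis
    using x(1) unfolding linf_nbhd_def linf_dist_less_iff by blast
qed

text \<open>Write \<open>d\<^sub>i = y\<^sub>i - e(a)\<^sub>i\<close>, so \<open>w \<bullet> y = d\<^sub>1 + d\<^sub>2 + d\<^sub>3 - d\<^sub>4\<close> with all \<open>|d\<^sub>i| < 1\<close>. If the
  slid point still has \<open>w \<bullet> z \<ge> 7/2\<close>, then \<open>d\<^sub>1, d\<^sub>2, d\<^sub>3 > 1/2 + 4s\<close> and \<open>d\<^sub>4 < -1/2 - 4s\<close>, so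
  subtracting \<open>s\<close> from the first three and adding it to the last cannot leave \<open>(-1,1)\<close>;
  the case \<open>w \<bullet> z \<le> -7/2\<close> is symmetric.\<close>

lemma slide_toward_hyperplane_stays_in_cube:
  assumes cube: "\<forall>i. \<bar>y$i - c$i\<bar> < 1" and "normal_dir \<bullet> c = 0"
    and s: "0 \<le> t" "t \<le> 1"
    and far: "7/2 \<le> \<bar>normal_dir \<bullet> (y - (t * (normal_dir \<bullet> y) / 4) *\<^sub>R normal_dir)\<bar>"
  shows "\<bar>(y - (t * (normal_dir \<bullet> y) / 4) *\<^sub>R normal_dir) $ i - c$i\<bar> < 1"
proof -
  define s where "s = t * (normal_dir \<bullet> y) / 4"
  have sum_c: "c$4 = c$1 + c$2 + c$3" using assms(2) by (simp add: inner_normal_dir)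
  have d: "\<bar>y$1 - c$1\<bar> < 1" "\<bar>y$2 - c$2\<bar> < 1" "\<bar>y$3 - c$3\<bar> < 1" "\<bar>y$4 - c$4\<bar> < 1"
    using cube by auto
  have s_between: "min 0 (normal_dir \<bullet> y / 4) \<le> s \<and> s \<le> max 0 (normal_dir \<bullet> y / 4)"
    using s unfolding s_def
    by (cases "0 \<le> normal_dir \<bullet> y")
      (auto simp: mult_left_le_one_le mult_le_cancel_right1 mult_nonneg_nonpos
        intro: mult_nonneg_nonneg)
  have "\<bar>y$j - s - c$j\<bar> < 1" if "j \<in> {1, 2, 3}" for j
    using that d far s_between sum_c unfolding s_def[symmetric]
    by (auto simp: inner_normal_dir abs_less_iff abs_le_iff min_def max_def split: if_splits)
  moreover have "\<bar>y$4 + s - c$4\<bar> < 1"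
    using d far s_between sum_c unfolding s_def[symmetric]
    by (auto simp: inner_normal_dir abs_less_iff abs_le_iff min_def max_def split: if_splits)
  ultimately show ?thesis
    using exhaust_4[of i] unfolding s_def[symmetric] by auto
qed

lemma segment_to_hyperplane_proj_subset_linf_nbhd:
  assumes "l1_dense (1/8) X" "y \<in> linf_nbhd 1 (emb ` X)"
  shows "closed_segment y (hyperplane_proj y) \<subseteq> linf_nbhd 1 (emb ` X)"
proof
  fix z assume "z \<in> closed_segment y (hyperplane_proj y)"
  then obtain t where t: "0 \<le> t" "t \<le> 1"
    and z: "z = y - (t * (normal_dir \<bullet> y) / 4) *\<^sub>R normal_dir"
    unfolding closed_segment_def hyperplane_proj_def by (auto simp: algebra_simps)
  show "z \<in> linf_nbhd 1 (emb ` X)"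
  proof (cases "\<bar>normal_dir \<bullet> z\<bar> < 7/2")
    case True
    then show ?thesis by (intro slab_subset_linf_nbhd[OF assms(1)]) simp
  next
    case False
    obtain a where a: "a \<in> X" "\<forall>i. \<bar>y$i - emb a $ i\<bar> < 1"
      using assms(2) unfolding linf_nbhd_def linf_dist_less_iff by blast
    have "\<bar>z$i - emb a $ i\<bar> < 1" for i
      unfolding z using slide_toward_hyperplane_stays_in_cube[OF a(2) _ t] False z by simp
    then show ?thesis
      using a(1) unfolding linf_nbhd_def linf_dist_less_iff by blast
  qed
qed

theorem theorem3p2:
  fixes X :: "(real^3) set"
  assumes "l1_dense (1/8) X"
  shows "contractible (linf_nbhd 1 (emb ` X))"
proof (rule contractible_by_segments_to_convex_subset)
  let ?H = "{q. normal_dir \<bullet> q = 0}"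
  show "convex ?H" by (rule convex_hyperplane)
  show "?H \<subseteq> linf_nbhd 1 (emb ` X)"
    using slab_subset_linf_nbhd[OF assms] by auto
  show "continuous_on (linf_nbhd 1 (emb ` X)) hyperplane_proj"
    unfolding hyperplane_proj_def by (intro continuous_intros) simp
  show "hyperplane_proj ` linf_nbhd 1 (emb ` X) \<subseteq> ?H" by auto
qed (rule segment_to_hyperplane_proj_subset_linf_nbhd[OF assms])

end
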